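(* Let $(P,\epsilon)$ be a labeled poset. Then $\Phi_\epsilon:\mathcal{A}(\epsilon)\to\mathcal{A}(-\epsilon)$, $\Phi_\epsilon\sigma=\sigma+\delta_\epsilon$, is a bijection if and only if $P$ is dual $\epsilon$-consistent.
   Context: $P$ is a finite poset with $p$ elements, $\omega:P\to\{1,\dots,p\}$ a bijection; write $x\prec y$ if $y$ covers $x$, $E(P)$ the covering pairs, and $\epsilon(x,y)=1$ if $\omega(x)<\omega(y)$, $-1$ otherwise. $-\epsilon$ is defined by $(-\epsilon)(x,y)=-\epsilon(x,y)$ (it is induced by the labeling $p+1-\omega$). For a labeling $\epsilon$, a $(P,\epsilon)$-partition is an order-reversing map $\sigma:P\to\{1,2,\dots\}$ ($x\le y\Rightarrow\sigma(x)\ge\sigma(y)$) with $\sigma(x)>\sigma(y)$ whenever $x\prec y$ and $\epsilon(x,y)=-1$; $\mathcal{A}(\epsilon)$ is the set of $(P,\epsilon)$-partitions. Define $\delta_\epsilon(x)=\max\sum_{i=1}^{\ell}\epsilon(x_{i-1},x_i)$ over all saturated chains $x=x_0\prec x_1\prec\cdots\prec x_\ell$ with $x_\ell$ maximal in $P$. The map $\Phi_\epsilon$ sends $\mathcal{A}(\epsilon)$ injectively into $\mathcal{A}(-\epsilon)$. The dual $(P^*,\epsilon^* )$ has $x<_{P^*}y$ iff $y<_P x$ and $\epsilon^*(y,x)=-\epsilon(x,y)$. A poset $Q$ with labeling $\nu$ is $\nu$-consistent if for each $z$, the sum $\sum\nu(x_{i-1},x_i)$ is the same over all maximal chains $x_0\prec\cdots\prec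 x_n$ of $\{w\le_Q z\}$. $P$ is dual $\epsilon$-consistent if $P^*$ is $\epsilon^*$-consistent. *)

theory Defs
  imports Main
begin

definition poset_on :: "'a set \<Rightarrow> ('a \<Rightarrow> 'a \<Rightarrow> bool) \<Rightarrow> bool" where
  "poset_on P le \<longleftrightarrow>
     (\<forall>x\<in>P. le x x) \<and>
     (\<forall>x\<in>P. \<forall>y\<in>P. le x y \<and> le y x \<longrightarrow> x = y) \<and>
     (\<forall>x\<in>P. \<forall>y\<in>P. \<forall>z\<in>P. le x y \<and> le y z \<longrightarrow> le x z)"

definition covers :: "'a set \<Rightarrow> ('a \<Rightarrow> 'a \<Rightarrow> bool) \<Rightarrow> 'a \<Rightarrow> 'a \<Rightarrow> bool" where
  "covers P le x y \<longleftrightarrow> x \<in> P \<and> y \<in> P \<and> le x y \<and> x \<noteq> y \<and>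
     \<not> (\<exists>z\<in>P. le x z \<and> le z y \<and> z \<noteq> x \<and> z \<noteq> y)"

definition maximal_in :: "'a set \<Rightarrow> ('a \<Rightarrow> 'a \<Rightarrow> bool) \<Rightarrow> 'a \<Rightarrow> bool" where
  "maximal_in P le x \<longleftrightarrow> x \<in> P \<and> \<not> (\<exists>y\<in>P. le x y \<and> y \<noteq> x)"

definition eps_of :: "('a \<Rightarrow> nat) \<Rightarrow> 'a \<Rightarrow> 'a \<Rightarrow> int" where
  "eps_of \<omega> x y = (if \<omega> x < \<omega> y then 1 else -1)"

definition neg_lab :: "('a \<Rightarrow> 'a \<Rightarrow> int) \<Rightarrow> 'a \<Rightarrow> 'a \<Rightarrow> int" where
  "neg_lab \<epsilon> x y = - \<epsilon> x y"

definition chain_sum :: "('a \<Rightarrow> 'a \<Rightarrow> int) \<Rightarrow> 'a list \<Rightarrow> int" where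
  "chain_sum \<nu> xs = (\<Sum>i<length xs - 1. \<nu> (xs ! i) (xs ! Suc i))"

definition sat_chain_to_max :: "'a set \<Rightarrow> ('a \<Rightarrow> 'a \<Rightarrow> bool) \<Rightarrow> 'a \<Rightarrow> 'a list \<Rightarrow> bool" where
  "sat_chain_to_max P le x xs \<longleftrightarrow> xs \<noteq> [] \<and> hd xs = x \<and> set xs \<subseteq> P \<and>
     (\<forall>i. Suc i < length xs \<longrightarrow> covers P le (xs ! i) (xs ! Suc i)) \<and>
     maximal_in P le (last xs)"

definition delta :: "'a set \<Rightarrow> ('a \<Rightarrow> 'a \<Rightarrow> bool) \<Rightarrow> ('a \<Rightarrow> 'a \<Rightarrow> int) \<Rightarrow> 'a \<Rightarrow> int" where
  "delta P le \<epsilon> x = Max {chain_sum \<epsilon> xs | xs. sat_chain_to_max P le x xs}"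

text \<open>(P,epsilon)-partitions: maps P \<rightarrow> {1,2,...} (represented as int-valued functions,
  equal to 0 outside P so that they are determined by their values on P).\<close>
definition partitions :: "'a set \<Rightarrow> ('a \<Rightarrow> 'a \<Rightarrow> bool) \<Rightarrow> ('a \<Rightarrow> 'a \<Rightarrow> int) \<Rightarrow> ('a \<Rightarrow> int) set" where
  "partitions P le \<epsilon> = {\<sigma>. (\<forall>x\<in>P. \<sigma> x \<ge> 1) \<and> (\<forall>x. x \<notin> P \<longrightarrow> \<sigma> x = 0) \<and>
      (\<forall>x\<in>P. \<forall>y\<in>P. le x y \<longrightarrow> \<sigma> x \<ge> \<sigma> y) \<and>
      (\<forall>x y. covers P le x y \<and> \<epsilon> x y = -1 \<longrightarrow> \<sigma> x > \<sigma> y)}"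

definition Phi :: "'a set \<Rightarrow> ('a \<Rightarrow> 'a \<Rightarrow> bool) \<Rightarrow> ('a \<Rightarrow> 'a \<Rightarrow> int) \<Rightarrow> ('a \<Rightarrow> int) \<Rightarrow> 'a \<Rightarrow> int" where
  "Phi P le \<epsilon> \<sigma> = (\<lambda>x. if x \<in> P then \<sigma> x + delta P le \<epsilon> x else 0)"

definition is_chain :: "('a \<Rightarrow> 'a \<Rightarrow> bool) \<Rightarrow> 'a set \<Rightarrow> 'a list \<Rightarrow> bool" where
  "is_chain le S xs \<longleftrightarrow> set xs \<subseteq> S \<and> sorted_wrt (\<lambda>a b. le a b \<and> a \<noteq> b) xs"

definition max_chain :: "('a \<Rightarrow> 'a \<Rightarrow> bool) \<Rightarrow> 'a set \<Rightarrow> 'a list \<Rightarrow> bool" where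
  "max_chain le S xs \<longleftrightarrow> is_chain le S xs \<and>
     (\<forall>ys. is_chain le S ys \<and> set xs \<subseteq> set ys \<longrightarrow> set ys = set xs)"

definition consistent :: "'a set \<Rightarrow> ('a \<Rightarrow> 'a \<Rightarrow> bool) \<Rightarrow> ('a \<Rightarrow> 'a \<Rightarrow> int) \<Rightarrow> bool" where
  "consistent Q le \<nu> \<longleftrightarrow> (\<forall>z\<in>Q. \<exists>c. \<forall>xs. max_chain le {w\<in>Q. le w z} xs \<longrightarrow> chain_sum \<nu> xs = c)"

definition dual_le :: "('a \<Rightarrow> 'a \<Rightarrow> bool) \<Rightarrow> 'a \<Rightarrow> 'a \<Rightarrow> bool" where
  "dual_le le x y = le y x"

definition dual_lab :: "('a \<Rightarrow> 'a \<Rightarrow> int) \<Rightarrow> 'a \<Rightarrow> 'a \<Rightarrow> int" where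
  "dual_lab \<epsilon> y x = - \<epsilon> x y"

definition dual_consistent :: "'a set \<Rightarrow> ('a \<Rightarrow> 'a \<Rightarrow> bool) \<Rightarrow> ('a \<Rightarrow> 'a \<Rightarrow> int) \<Rightarrow> bool" where
  "dual_consistent P le \<epsilon> \<longleftrightarrow> consistent P (dual_le le) (dual_lab \<epsilon>)"

end

theory Submission
  imports Defs
begin

(* Along a cover x \<prec> y the maximal chain sum satisfies \<delta> x \<ge> \<epsilon>(x,y) + \<delta> y; this is exactly
  what makes \<sigma> + \<delta> a (P,-\<epsilon>)-partition, and \<Phi> is trivially injective. Both bijectivity of \<Phi>
  and dual \<epsilon>-consistency turn out to be equivalent to equality \<delta> x = \<epsilon>(x,y) + \<delta> y on all
  covers. For consistency: the maximal chains of {w \<le>* z} in P* are the reversed saturated chains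
  from z up to a maximal element, and reversal negates the labels, so consistency at z says that
  all these chains have the same \<epsilon>-sum, namely \<delta> z. For surjectivity: under additivity
  \<tau> - \<delta> is a (P,\<epsilon>)-partition for every (P,-\<epsilon>)-partition \<tau>; if additivity fails at a cover
  x \<prec> y, a (P,-\<epsilon>)-partition that is as tight as allowed at x \<prec> y has no preimage. *)

lemma sat_chain_to_max_altdef:
  "sat_chain_to_max P le x xs \<longleftrightarrow> xs \<noteq> [] \<and> hd xs = x \<and> set xs \<subseteq> P \<and>
     successively (covers P le) xs \<and> maximal_in P le (last xs)"
  unfolding sat_chain_to_max_def successively_conv_nth ..

lemma sat_chain_to_max_Nil [simp]: "\<not> sat_chain_to_max P le x []"
  by (simp add: sat_chain_to_max_def)

lemma sat_chain_to_max_singleton [simp]: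
  "sat_chain_to_max P le x [y] \<longleftrightarrow> y = x \<and> maximal_in P le x"
  by (auto simp: sat_chain_to_max_altdef maximal_in_def)

lemma sat_chain_to_max_Cons_Cons [simp]:
  "sat_chain_to_max P le x (a # b # zs) \<longleftrightarrow>
     a = x \<and> covers P le x b \<and> sat_chain_to_max P le b (b # zs)"
  by (auto simp: sat_chain_to_max_altdef covers_def)

lemma sat_chain_to_max_ConsE:
  assumes "sat_chain_to_max P le x xs"
  obtains ys where "xs = x # ys"
  using assms by (cases xs) (auto simp: sat_chain_to_max_def)

lemma chain_sum_Nil [simp]: "chain_sum \<nu> [] = 0"
  by (simp add: chain_sum_def)

lemma chain_sum_singleton [simp]: "chain_sum \<nu> [a] = 0"
  by (simp add: chain_sum_def)

lemma chain_sum_Cons_Cons [simp]: "chain_sum \<nu> (a # b # zs) = \<nu> a b + chain_sum \<nu> (b # zs)"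
  unfolding chain_sum_def by (simp add: sum.lessThan_Suc_shift del: sum.lessThan_Suc)

lemma chain_sum_snoc: "xs \<noteq> [] \<Longrightarrow> chain_sum \<nu> (xs @ [b]) = chain_sum \<nu> xs + \<nu> (last xs) b"
proof (induction xs rule: induct_list012)
  case (3 x y zs)
  then show ?case by simp
qed simp_all

lemma chain_sum_rev_dual_lab: "chain_sum (dual_lab \<nu>) (rev xs) = - chain_sum \<nu> xs"
proof (induction xs rule: induct_list012)
  case (3 x y zs)
  have "chain_sum (dual_lab \<nu>) (rev (y # zs) @ [x]) =
      chain_sum (dual_lab \<nu>) (rev (y # zs)) + dual_lab \<nu> y x"
    using chain_sum_snoc[of "rev (y # zs)" "dual_lab \<nu>" x] by simp
  moreover have "dual_lab \<nu> y x = - \<nu> x y"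
    by (simp add: dual_lab_def)
  ultimately show ?case
    using "3.IH"(2) by simp
qed simp_all

lemma sorted_wrt_distinct: "sorted_wrt R xs \<Longrightarrow> (\<And>x. \<not> R x x) \<Longrightarrow> distinct xs"
  by (induction xs) auto

lemma sorted_wrt_comparable:
  "sorted_wrt R xs \<Longrightarrow> a \<in> set xs \<Longrightarrow> b \<in> set xs \<Longrightarrow> a \<noteq> b \<Longrightarrow> R a b \<or> R b a"
  by (induction xs) auto

lemma ex_sorted_wrt_insert:
  assumes "transp R" "sorted_wrt R xs" "\<forall>a\<in>set xs. R a w \<or> R w a"
  shows "\<exists>ys. sorted_wrt R ys \<and> set ys = insert w (set xs)"
  using assms(2,3)
proof (induction xs)
  case Nil
  show ?case by (rule exI[of _ "[w]"]) simp
next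
  case (Cons a xs)
  show ?case
  proof (cases "R w a")
    case True
    with Cons.prems assms(1) have "sorted_wrt R (w # a # xs)" by (auto dest: transpD)
    then show ?thesis by (intro exI[of _ "w # a # xs"]) simp
  next
    case False
    with Cons.prems have "R a w" by simp
    from Cons obtain ys where "sorted_wrt R ys" "set ys = insert w (set xs)" by auto
    with \<open>R a w\<close> Cons.prems(1) have "sorted_wrt R (a # ys) \<and> set (a # ys) = insert w (set (a # xs))"
      by auto
    then show ?thesis by blast
  qed
qed

locale finite_poset =
  fixes P :: "'a set" and le :: "'a \<Rightarrow> 'a \<Rightarrow> bool"
  assumes finite_P: "finite P" and poset: "poset_on P le"
begin

lemma le_refl_on: "x \<in> P \<Longrightarrow> le x x"
  using poset unfolding poset_on_def by blast

lemma le_antisym_on: "x \<in> P \<Longrightarrow> y \<in> P \<Longrightarrow> le x y \<Longrightarrow> le y x \<Longrightarrow> x = y"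
  using poset unfolding poset_on_def by blast

lemma le_trans_on: "x \<in> P \<Longrightarrow> y \<in> P \<Longrightarrow> z \<in> P \<Longrightarrow> le x y \<Longrightarrow> le y z \<Longrightarrow> le x z"
  using poset unfolding poset_on_def by blast

definition lt :: "'a \<Rightarrow> 'a \<Rightarrow> bool" where
  "lt x y \<longleftrightarrow> x \<in> P \<and> y \<in> P \<and> le x y \<and> x \<noteq> y"

lemma lt_trans: "lt x y \<Longrightarrow> lt y z \<Longrightarrow> lt x z"
  unfolding lt_def by (metis le_trans_on le_antisym_on)

lemma transp_lt: "transp lt"
  by (rule transpI) (rule lt_trans)

lemma covers_imp_lt: "covers P le x y \<Longrightarrow> lt x y"
  unfolding covers_def lt_def by blast

definition strict_up :: "'a \<Rightarrow> 'a set" where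
  "strict_up x = {y \<in> P. lt x y}"

lemma card_strict_up_le: "card (strict_up x) \<le> card P"
  unfolding strict_up_def using finite_P by (intro card_mono) auto

lemma card_strict_up_less:
  assumes "lt x y"
  shows "card (strict_up y) < card (strict_up x)"
proof (rule psubset_card_mono)
  show "finite (strict_up x)"
    unfolding strict_up_def using finite_P by simp
  have "y \<in> strict_up x - strict_up y"
    using assms unfolding strict_up_def lt_def by auto
  moreover have "strict_up y \<subseteq> strict_up x"
    unfolding strict_up_def using assms lt_trans by blast
  ultimately show "strict_up y \<subset> strict_up x"
    by blast
qed

lemma strict_up_induct [consumes 1, case_names step]:
  assumes "x \<in> P"
    and "\<And>x. x \<in> P \<Longrightarrow> (\<And>y. lt x y \<Longrightarrow> Q y) \<Longrightarrow> Q x"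
  shows "Q x"
  using assms(1)
proof (induction x rule: measure_induct_rule[where f = "\<lambda>x. card (strict_up x)"])
  case (less x)
  show ?case
  proof (rule assms(2)[OF less.prems])
    fix y
    assume "lt x y"
    then show "Q y"
      using less.IH[OF card_strict_up_less] by (simp add: lt_def)
  qed
qed

lemma exists_cover_below:
  assumes "lt x v"
  obtains y where "covers P le x y" and "le y v"
proof -
  define S where "S = {u. lt x u \<and> le u v}"
  have "v \<in> S"
    using assms le_refl_on unfolding S_def lt_def by auto
  moreover have "\<forall>u. u \<in> S \<longrightarrow> card (strict_up u) < card P + 1"
    using card_strict_up_le by (simp add: le_imp_less_Suc)
  ultimately obtain u where u: "u \<in> S"
    and u_max: "\<And>t. t \<in> S \<Longrightarrow> card (strict_up t) \<le> card (strict_up u)"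
    using ex_has_greatest_nat[of "\<lambda>u. u \<in> S" v "\<lambda>u. card (strict_up u)"] by blast
  have "covers P le x u"
    unfolding covers_def
  proof (intro conjI)
    show "x \<in> P" "u \<in> P" "le x u" "x \<noteq> u"
      using u unfolding S_def lt_def by auto
    show "\<not> (\<exists>t\<in>P. le x t \<and> le t u \<and> t \<noteq> x \<and> t \<noteq> u)"
    proof
      assume "\<exists>t\<in>P. le x t \<and> le t u \<and> t \<noteq> x \<and> t \<noteq> u"
      then obtain t where "lt x t" "lt t u"
        using u unfolding S_def lt_def by auto
      have "le t v"
        using \<open>lt t u\<close> u assms le_trans_on[of t u v] unfolding S_def lt_def by blast
      with \<open>lt x t\<close> have "t \<in> S"
        unfolding S_def by blast
      moreover have "card (strict_up u) < card (strict_up t)"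
        using \<open>lt t u\<close> by (rule card_strict_up_less)
      ultimately show False
        using u_max by fastforce
    qed
  qed
  then show thesis
    using that u unfolding S_def by blast
qed

lemma exists_maximal_above:
  assumes "x \<in> P"
  obtains m where "maximal_in P le m" and "le x m"
  using assms
proof (induction x arbitrary: thesis rule: strict_up_induct)
  case (step x)
  show ?case
  proof (cases "maximal_in P le x")
    case True
    then show ?thesis using step le_refl_on by blast
  next
    case False
    then obtain y where "lt x y"
      using step.hyps unfolding maximal_in_def lt_def by blast
    obtain m where "maximal_in P le m" "le y m"
      using step.IH[OF \<open>lt x y\<close>] by blast
    moreover have "le x m"
      using le_trans_on[of x y m] \<open>lt x y\<close> \<open>maximal_in P le m\<close> \<open>le y m\<close>
      unfolding lt_def maximal_in_def by blast
    ultimately show ?thesis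
      using step.prems by blast
  qed
qed

lemma antitone_if_antitone_on_covers:
  fixes f :: "'a \<Rightarrow> 'b :: preorder"
  assumes antitone: "\<And>a b. covers P le a b \<Longrightarrow> f b \<le> f a"
    and "x \<in> P" "v \<in> P" "le x v"
  shows "f v \<le> f x"
  using assms(2,4)
proof (induction x rule: strict_up_induct)
  case (step x)
  show ?case
  proof (cases "x = v")
    case False
    with step.prems step.hyps assms(3) have "lt x v"
      unfolding lt_def by blast
    then obtain y where y: "covers P le x y" "le y v"
      by (rule exists_cover_below)
    then have "f v \<le> f y"
      using step.IH covers_imp_lt lt_def by blast
    also have "f y \<le> f x"
      using antitone y(1) .
    finally show ?thesis .
  qed simp
qed

abbreviation sat :: "'a \<Rightarrow> 'a list \<Rightarrow> bool" where
  "sat \<equiv> sat_chain_to_max P le"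

lemma sat_chain_exists:
  assumes "x \<in> P"
  obtains xs where "sat x xs"
  using assms
proof (induction x arbitrary: thesis rule: strict_up_induct)
  case (step x)
  show ?case
  proof (cases "maximal_in P le x")
    case True
    then show ?thesis
      using step.prems by (meson sat_chain_to_max_singleton)
  next
    case False
    then obtain v where "lt x v"
      using step.hyps unfolding maximal_in_def lt_def by blast
    then obtain y where y: "covers P le x y"
      using exists_cover_below by blast
    then obtain ys where "sat y (y # ys)"
      using step.IH[OF covers_imp_lt] sat_chain_to_max_ConsE by metis
    with y have "sat x (x # y # ys)"
      by simp
    then show ?thesis
      by (rule step.prems)
  qed
qed

lemma sat_chain_sorted: "sat x xs \<Longrightarrow> sorted_wrt lt xs"
  unfolding sat_chain_to_max_altdef successively_conv_sorted_wrt[OF transp_lt, symmetric]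
  using successively_mono covers_imp_lt by blast

lemma finite_sat_chains: "finite {xs. sat x xs}"
proof (rule finite_subset)
  show "{xs. sat x xs} \<subseteq> {xs. set xs \<subseteq> P \<and> length xs \<le> card P}"
  proof clarify
    fix xs
    assume "sat x xs"
    then have "set xs \<subseteq> P" and "distinct xs"
      using sat_chain_sorted sorted_wrt_distinct unfolding sat_chain_to_max_def lt_def by blast+
    then show "set xs \<subseteq> P \<and> length xs \<le> card P"
      using card_mono[OF finite_P] distinct_card by metis
  qed
  show "finite {xs. set xs \<subseteq> P \<and> length xs \<le> card P}"
    using finite_P by (rule finite_lists_length_le)
qed

lemma delta_eq_Max: "delta P le \<nu> x = Max (chain_sum \<nu> ` {xs. sat x xs})"
  unfolding delta_def by (simp add: image_Collect)

lemma chain_sum_le_delta: "sat x xs \<Longrightarrow> chain_sum \<nu> xs \<le> delta P le \<nu> x"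
  unfolding delta_eq_Max using finite_sat_chains by (intro Max_ge finite_imageI) auto

lemma delta_attained:
  assumes "x \<in> P"
  obtains xs where "sat x xs" and "chain_sum \<nu> xs = delta P le \<nu> x"
proof -
  obtain xs where "sat x xs"
    using assms by (rule sat_chain_exists)
  then have "chain_sum \<nu> ` {xs. sat x xs} \<noteq> {}"
    by auto
  then have "delta P le \<nu> x \<in> chain_sum \<nu> ` {xs. sat x xs}"
    unfolding delta_eq_Max using finite_sat_chains by (intro Max_in finite_imageI)
  then show thesis
    using that by auto
qed

lemma delta_cover_le:
  assumes "covers P le x y"
  shows "\<nu> x y + delta P le \<nu> y \<le> delta P le \<nu> x"
proof -
  have "y \<in> P"
    using assms unfolding covers_def by blast
  then obtain ys where ys: "sat y ys" "chain_sum \<nu> ys = delta P le \<nu> y"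
    by (rule delta_attained)
  obtain zs where "ys = y # zs"
    using ys(1) by (rule sat_chain_to_max_ConsE)
  with assms ys have "sat x (x # ys)" and "chain_sum \<nu> (x # ys) = \<nu> x y + delta P le \<nu> y"
    by simp_all
  then show ?thesis
    using chain_sum_le_delta by metis
qed

lemma delta_maximal:
  assumes "maximal_in P le x"
  shows "delta P le \<nu> x = 0"
proof -
  have "xs = [x]" if "sat x xs" for xs
  proof -
    obtain zs where "xs = x # zs"
      using \<open>sat x xs\<close> by (rule sat_chain_to_max_ConsE)
    with assms that show ?thesis
      by (cases zs) (auto simp: covers_def maximal_in_def)
  qed
  moreover have "x \<in> P"
    using assms unfolding maximal_in_def by blast
  ultimately show ?thesis
    by (metis delta_attained chain_sum_singleton)
qed

definition delta_additive :: "('a \<Rightarrow> 'a \<Rightarrow> int) \<Rightarrow> bool" where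
  "delta_additive \<nu> \<longleftrightarrow>
     (\<forall>x y. covers P le x y \<longrightarrow> delta P le \<nu> x = \<nu> x y + delta P le \<nu> y)"

lemma chain_sum_eq_delta_if_additive:
  "delta_additive \<nu> \<Longrightarrow> sat x xs \<Longrightarrow> chain_sum \<nu> xs = delta P le \<nu> x"
proof (induction xs arbitrary: x rule: induct_list012)
  case (2 a)
  then show ?case
    by (simp add: delta_maximal)
next
  case (3 a b zs)
  then have "a = x" "covers P le x b" "chain_sum \<nu> (b # zs) = delta P le \<nu> b"
    using "3.IH"(2)[of b] by simp_all
  with "3.prems"(1) show ?case
    unfolding delta_additive_def by simp
qed simp

definition upset :: "'a \<Rightarrow> 'a set" where
  "upset z = {w \<in> P. le z w}"

lemma dual_downset_eq_upset: "{w \<in> P. dual_le le w z} = upset z"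
  unfolding upset_def dual_le_def ..

definition unextendable :: "'a \<Rightarrow> 'a list \<Rightarrow> bool" where
  "unextendable z xs \<longleftrightarrow> (\<forall>w\<in>upset z. (\<forall>a\<in>set xs. le a w \<or> le w a) \<longrightarrow> w \<in> set xs)"

lemma is_chain_dual_rev_iff:
  "is_chain (dual_le le) (upset z) (rev xs) \<longleftrightarrow> set xs \<subseteq> upset z \<and> sorted_wrt lt xs"
proof -
  have "sorted_wrt (\<lambda>a b. le a b \<and> b \<noteq> a) xs \<longleftrightarrow> sorted_wrt lt xs" if "set xs \<subseteq> upset z"
  proof
    show "sorted_wrt (\<lambda>a b. le a b \<and> b \<noteq> a) xs \<Longrightarrow> sorted_wrt lt xs"
      by (erule sorted_wrt_mono_rel[rotated]) (use that in \<open>auto simp: upset_def lt_def\<close>)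
    show "sorted_wrt lt xs \<Longrightarrow> sorted_wrt (\<lambda>a b. le a b \<and> b \<noteq> a) xs"
      by (erule sorted_wrt_mono_rel[rotated]) (auto simp: lt_def)
  qed
  then show ?thesis
    unfolding is_chain_def sorted_wrt_rev dual_le_def by auto
qed

lemma max_chain_dual_rev_iff:
  "max_chain (dual_le le) (upset z) (rev xs) \<longleftrightarrow>
     set xs \<subseteq> upset z \<and> sorted_wrt lt xs \<and> unextendable z xs"
  unfolding unextendable_def
proof (intro iffI conjI ballI impI)
  assume max: "max_chain (dual_le le) (upset z) (rev xs)"
  then show chain: "set xs \<subseteq> upset z" "sorted_wrt lt xs"
    unfolding max_chain_def is_chain_dual_rev_iff by blast+
  fix w
  assume w: "w \<in> upset z" and comparable: "\<forall>a\<in>set xs. le a w \<or> le w a"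
  show "w \<in> set xs"
  proof (rule ccontr)
    assume "w \<notin> set xs"
    with chain w comparable have "\<forall>a\<in>set xs. lt a w \<or> lt w a"
      unfolding upset_def lt_def by blast
    then obtain ys where ys: "sorted_wrt lt ys" "set ys = insert w (set xs)"
      using ex_sorted_wrt_insert[OF transp_lt \<open>sorted_wrt lt xs\<close>] by blast
    with chain w have "is_chain (dual_le le) (upset z) (rev ys)"
      unfolding is_chain_dual_rev_iff by auto
    moreover have "set (rev xs) \<subseteq> set (rev ys)"
      using ys(2) by auto
    ultimately have "set ys = set xs"
      using max unfolding max_chain_def by (metis set_rev)
    with ys \<open>w \<notin> set xs\<close> show False
      by blast
  qed
next
  assume rhs: "set xs \<subseteq> upset z \<and> sorted_wrt lt xs \<and>
    (\<forall>w\<in>upset z. (\<forall>a\<in>set xs. le a w \<or> le w a) \<longrightarrow> w \<in> set xs)"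
  show "max_chain (dual_le le) (upset z) (rev xs)"
    unfolding max_chain_def
  proof (intro conjI allI impI)
    show "is_chain (dual_le le) (upset z) (rev xs)"
      using rhs is_chain_dual_rev_iff by blast
    fix ys
    assume ys: "is_chain (dual_le le) (upset z) ys \<and> set (rev xs) \<subseteq> set ys"
    then have "set (rev ys) \<subseteq> upset z" "sorted_wrt lt (rev ys)"
      using is_chain_dual_rev_iff[of z "rev ys"] by simp_all
    have "w \<in> set xs" if "w \<in> set ys" for w
    proof -
      have "le a w \<or> le w a" if "a \<in> set xs" for a
        using sorted_wrt_comparable[OF \<open>sorted_wrt lt (rev ys)\<close>, of a w]
          \<open>a \<in> set xs\<close> \<open>w \<in> set ys\<close> ys le_refl_on \<open>set (rev ys) \<subseteq> upset z\<close>
        unfolding lt_def upset_def by (cases "a = w") auto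
      then show ?thesis
        using rhs \<open>set (rev ys) \<subseteq> upset z\<close> \<open>w \<in> set ys\<close> by auto
    qed
    with ys show "set ys = set (rev xs)"
      by auto
  qed
qed

lemma sat_chain_contains_comparable:
  "sat x xs \<Longrightarrow> w \<in> P \<Longrightarrow> le x w \<Longrightarrow> \<forall>a\<in>set xs. le a w \<or> le w a \<Longrightarrow> w \<in> set xs"
proof (induction xs arbitrary: x rule: induct_list012)
  case (2 a)
  then have "a = x" "maximal_in P le x"
    by simp_all
  with "2.prems"(2,3) show ?case
    unfolding maximal_in_def by auto
next
  case (3 a b zs)
  then have cover: "a = x" "covers P le x b" and "sat b (b # zs)"
    by simp_all
  show ?case
  proof (cases "le b w")
    case True
    then show ?thesis
      using "3.IH"(2) \<open>sat b (b # zs)\<close> "3.prems"(2,4) by auto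
  next
    case False
    with "3.prems"(4) have "le w b"
      by simp
    with cover "3.prems"(2,3) have "w = x \<or> w = b"
      unfolding covers_def by blast
    with cover show ?thesis
      by auto
  qed
qed simp

lemma sat_chain_if_unextendable:
  assumes "sorted_wrt lt (z # r)" and "z \<in> P"
    and "unextendable z (z # r)"
  shows "sat z (z # r)"
  using assms
proof (induction r arbitrary: z)
  case Nil
  have "maximal_in P le z"
    using Nil.prems(2,3) unfolding unextendable_def maximal_in_def upset_def by auto
  then show ?case
    by simp
next
  case (Cons y r)
  have zy: "lt z y" and above_y: "\<forall>c\<in>set r. lt y c"
    using Cons.prems(1) by simp_all
  have "covers P le z y"
    unfolding covers_def
  proof (intro conjI)
    show "z \<in> P" "y \<in> P" "le z y" "z \<noteq> y"
      using zy unfolding lt_def by blast+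
    show "\<not> (\<exists>w\<in>P. le z w \<and> le w y \<and> w \<noteq> z \<and> w \<noteq> y)"
    proof
      assume "\<exists>w\<in>P. le z w \<and> le w y \<and> w \<noteq> z \<and> w \<noteq> y"
      then obtain w where w: "w \<in> P" "le z w" "le w y" "w \<noteq> z" "w \<noteq> y"
        by blast
      have "le w c" if "c \<in> set r" for c
        using w above_y that le_trans_on[of w y c] unfolding lt_def by blast
      with w have "w \<in> set r"
        using Cons.prems(3) unfolding unextendable_def upset_def by auto
      with above_y w le_antisym_on show False
        unfolding lt_def by blast
    qed
  qed
  moreover have "sat y (y # r)"
  proof (rule Cons.IH)
    show "sorted_wrt lt (y # r)" "y \<in> P"
      using Cons.prems(1) zy unfolding lt_def by simp_all
    show "unextendable y (y # r)"
      unfolding unextendable_def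
    proof (intro ballI impI)
      fix w
      assume w: "w \<in> upset y" and comparable: "\<forall>a\<in>set (y # r). le a w \<or> le w a"
      have "le z w"
        using w zy le_trans_on[of z y w] unfolding upset_def lt_def by blast
      with w comparable have "w \<in> set (z # y # r)"
        using Cons.prems(3) unfolding unextendable_def upset_def by auto
      moreover have "w \<noteq> z"
        using w zy le_antisym_on unfolding upset_def lt_def by blast
      ultimately show "w \<in> set (y # r)"
        by simp
    qed
  qed
  ultimately show ?case
    by simp
qed

lemma max_chain_dual_rev_iff_sat:
  assumes "z \<in> P"
  shows "max_chain (dual_le le) (upset z) (rev xs) \<longleftrightarrow> sat z xs"
proof
  assume "max_chain (dual_le le) (upset z) (rev xs)"
  then have chain: "set xs \<subseteq> upset z" "sorted_wrt lt xs"
    and unext: "unextendable z xs"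
    unfolding max_chain_dual_rev_iff by blast+
  have "z \<in> set xs"
    using unext chain(1) assms le_refl_on unfolding unextendable_def upset_def by blast
  then obtain a r where xs: "xs = a # r"
    by (cases xs) auto
  have "a = z"
  proof (rule ccontr)
    assume "a \<noteq> z"
    with chain \<open>z \<in> set xs\<close> xs have "lt a z" and "le z a"
      unfolding upset_def by auto
    with le_antisym_on show False
      unfolding lt_def by blast
  qed
  with xs chain unext assms show "sat z xs"
    using sat_chain_if_unextendable by blast
next
  assume sat: "sat z xs"
  then obtain r where xs: "xs = z # r"
    by (rule sat_chain_to_max_ConsE)
  have sorted: "sorted_wrt lt xs"
    using sat by (rule sat_chain_sorted)
  with xs assms le_refl_on have "set xs \<subseteq> upset z"
    unfolding upset_def lt_def by auto
  moreover have "unextendable z xs"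
    using sat_chain_contains_comparable[OF sat] unfolding unextendable_def upset_def by blast
  ultimately show "max_chain (dual_le le) (upset z) (rev xs)"
    unfolding max_chain_dual_rev_iff using sorted by blast
qed

lemma dual_consistent_iff_delta_additive:
  "dual_consistent P le \<nu> \<longleftrightarrow> delta_additive \<nu>"
  unfolding dual_consistent_def consistent_def dual_downset_eq_upset
proof (intro iffI ballI)
  assume consistent:
    "\<forall>z\<in>P. \<exists>c. \<forall>xs. max_chain (dual_le le) (upset z) xs \<longrightarrow> chain_sum (dual_lab \<nu>) xs = c"
  show "delta_additive \<nu>"
    unfolding delta_additive_def
  proof (intro allI impI)
    fix x y
    assume cover: "covers P le x y"
    then have "x \<in> P" "y \<in> P"
      unfolding covers_def by blast+
    obtain xs where xs: "sat x xs" "chain_sum \<nu> xs = delta P le \<nu> x"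
      using \<open>x \<in> P\<close> by (rule delta_attained)
    obtain ys where ys: "sat y ys" "chain_sum \<nu> ys = delta P le \<nu> y"
      using \<open>y \<in> P\<close> by (rule delta_attained)
    obtain zs where "ys = y # zs"
      using ys(1) by (rule sat_chain_to_max_ConsE)
    with cover ys have "sat x (x # ys)" and "chain_sum \<nu> (x # ys) = \<nu> x y + delta P le \<nu> y"
      by simp_all
    moreover obtain c
      where "\<forall>xs. max_chain (dual_le le) (upset x) xs \<longrightarrow> chain_sum (dual_lab \<nu>) xs = c"
      using consistent \<open>x \<in> P\<close> by blast
    ultimately have "chain_sum (dual_lab \<nu>) (rev xs) = chain_sum (dual_lab \<nu>) (rev (x # ys))"
      using xs(1) max_chain_dual_rev_iff_sat[OF \<open>x \<in> P\<close>] by metis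
    with xs(2) \<open>chain_sum \<nu> (x # ys) = _\<close> show "delta P le \<nu> x = \<nu> x y + delta P le \<nu> y"
      unfolding chain_sum_rev_dual_lab by simp
  qed
next
  fix z
  assume "delta_additive \<nu>" and "z \<in> P"
  have "chain_sum (dual_lab \<nu>) ys = - delta P le \<nu> z"
    if "max_chain (dual_le le) (upset z) ys" for ys
  proof -
    have "sat z (rev ys)"
      using that max_chain_dual_rev_iff_sat[OF \<open>z \<in> P\<close>, of "rev ys"] by simp
    then have "chain_sum \<nu> (rev ys) = delta P le \<nu> z"
      by (rule chain_sum_eq_delta_if_additive[OF \<open>delta_additive \<nu>\<close>])
    then show ?thesis
      using chain_sum_rev_dual_lab[of \<nu> "rev ys"] by simp
  qed
  then show "\<exists>c. \<forall>ys. max_chain (dual_le le) (upset z) ys \<longrightarrow> chain_sum (dual_lab \<nu>) ys = c"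
    by blast
qed

lemma partitions_iff_covers:
  "\<sigma> \<in> partitions P le \<nu> \<longleftrightarrow>
     (\<forall>x. x \<notin> P \<longrightarrow> \<sigma> x = 0) \<and> (\<forall>m. maximal_in P le m \<longrightarrow> 1 \<le> \<sigma> m) \<and>
     (\<forall>x y. covers P le x y \<longrightarrow> \<sigma> y \<le> \<sigma> x \<and> (\<nu> x y = -1 \<longrightarrow> \<sigma> y < \<sigma> x))"
    (is "_ \<longleftrightarrow> ?zero \<and> ?maximal \<and> ?covers")
proof
  assume "\<sigma> \<in> partitions P le \<nu>"
  then show "?zero \<and> ?maximal \<and> ?covers"
    unfolding partitions_def maximal_in_def covers_def by blast
next
  assume "?zero \<and> ?maximal \<and> ?covers"
  then have zero: ?zero and maximal: ?maximal and covers: ?covers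
    by blast+
  have antitone: "\<sigma> y \<le> \<sigma> x" if "x \<in> P" "y \<in> P" "le x y" for x y
    using antitone_if_antitone_on_covers[of \<sigma>] covers that by blast
  have "1 \<le> \<sigma> x" if "x \<in> P" for x
  proof -
    obtain m where "maximal_in P le m" "le x m"
      using \<open>x \<in> P\<close> by (rule exists_maximal_above)
    then show ?thesis
      using maximal antitone[of x m] \<open>x \<in> P\<close> unfolding maximal_in_def by fastforce
  qed
  with zero antitone covers show "\<sigma> \<in> partitions P le \<nu>"
    unfolding partitions_def by blast
qed

lemma inj_on_Phi: "inj_on (Phi P le \<nu>) (partitions P le \<nu>)"
proof (rule inj_onI)
  fix \<sigma> \<tau>
  assume "\<sigma> \<in> partitions P le \<nu>" "\<tau> \<in> partitions P le \<nu>" and eq: "Phi P le \<nu> \<sigma> = Phi P le \<nu> \<tau>"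
  then have "\<sigma> x = \<tau> x" for x
    using fun_cong[OF eq, of x] unfolding partitions_def Phi_def by (cases "x \<in> P") auto
  then show "\<sigma> = \<tau>" ..
qed

lemma exists_partition_tight_at_cover:
  assumes cover: "covers P le x y"
  obtains \<tau> where "\<tau> \<in> partitions P le \<nu>" and "\<tau> x = \<tau> y + (if \<nu> x y = -1 then 1 else 0)"
proof -
  (* h is strictly antitone with values in [1, M]; lifting the down-set of y by M lets x sit
    just above y while still exceeding every other upper cover of x. *)
  define h where "h w = 1 + int (card (strict_up w))" for w
  define M where "M = 1 + int (card P)"
  define gap where "gap = (if \<nu> x y = -1 then 1 else 0 :: int)"
  define \<tau> where "\<tau> w =
    (if w \<notin> P then 0 else if w = x then h y + M + gap else h w + (if le w y then M else 0))" for w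
  have h_less: "h b < h a" if "lt a b" for a b
    using card_strict_up_less[OF that] unfolding h_def by simp
  have h_bounds: "1 \<le> h w" "h w \<le> M" for w
    using card_strict_up_le[of w] unfolding h_def M_def by simp_all
  have xy: "x \<in> P" "y \<in> P" "lt x y"
    using cover covers_imp_lt unfolding covers_def by blast+
  have \<tau>_x: "\<tau> x = \<tau> y + gap"
    using xy le_refl_on unfolding \<tau>_def lt_def by auto
  have \<tau>_cover: "\<tau> b < \<tau> a" if "covers P le a b" "(a, b) \<noteq> (x, y)" for a b
  proof -
    have ab: "a \<in> P" "b \<in> P" "lt a b"
      using that(1) covers_imp_lt unfolding covers_def by blast+
    consider "a = x" | "b = x" | "a \<noteq> x" "b \<noteq> x"
      by blast
    then show ?thesis
    proof cases
      case 1
      with that have "\<not> le b y"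
        using cover ab xy unfolding covers_def lt_def by blast
      with 1 ab xy show ?thesis
        using h_bounds[of b] h_bounds[of y] unfolding \<tau>_def gap_def lt_def by auto
    next
      case 2
      with ab xy have "le a y" "h x < h a" "h y < h x"
        using le_trans_on[of a x y] h_less unfolding lt_def by blast+
      with 2 ab xy show ?thesis
        unfolding \<tau>_def gap_def lt_def by auto
    next
      case 3
      have "le b y \<longrightarrow> le a y"
        using ab xy le_trans_on[of a b y] unfolding lt_def by blast
      with 3 ab h_less[OF ab(3)] show ?thesis
        unfolding \<tau>_def M_def by auto
    qed
  qed
  have "\<tau> \<in> partitions P le \<nu>"
    unfolding partitions_iff_covers
  proof (intro conjI allI impI)
    show "\<tau> w = 0" if "w \<notin> P" for w
      using that unfolding \<tau>_def by simp
    show "1 \<le> \<tau> m" if "maximal_in P le m" for m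
      using that h_bounds(1)[of m] h_bounds(1)[of y]
      unfolding \<tau>_def gap_def M_def maximal_in_def by auto
    fix a b
    assume "covers P le a b"
    then show "\<tau> b \<le> \<tau> a" "\<nu> a b = -1 \<Longrightarrow> \<tau> b < \<tau> a"
      using \<tau>_x \<tau>_cover[of a b] unfolding gap_def by (cases "(a, b) = (x, y)"; force)+
  qed
  with \<tau>_x show thesis
    using that unfolding gap_def by blast
qed

end

locale labeled_poset = finite_poset +
  fixes \<epsilon> :: "'a \<Rightarrow> 'a \<Rightarrow> int"
  assumes label_values: "\<epsilon> x y = 1 \<or> \<epsilon> x y = -1"
begin

lemma neg_lab_eq_minus_one_iff: "neg_lab \<epsilon> x y = -1 \<longleftrightarrow> \<epsilon> x y = 1"
  unfolding neg_lab_def by auto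

lemma Phi_mem_partitions_neg:
  assumes \<sigma>: "\<sigma> \<in> partitions P le \<epsilon>"
  shows "Phi P le \<epsilon> \<sigma> \<in> partitions P le (neg_lab \<epsilon>)"
  unfolding partitions_iff_covers neg_lab_eq_minus_one_iff
proof (intro conjI allI impI)
  show "Phi P le \<epsilon> \<sigma> x = 0" if "x \<notin> P" for x
    using that unfolding Phi_def by simp
  show "1 \<le> Phi P le \<epsilon> \<sigma> m" if "maximal_in P le m" for m
  proof -
    have "m \<in> P"
      using that unfolding maximal_in_def by blast
    with \<sigma> show ?thesis
      using delta_maximal[OF that] unfolding partitions_def Phi_def by auto
  qed
  fix x y
  assume cover: "covers P le x y"
  then have "x \<in> P" "y \<in> P"
    unfolding covers_def by blast+
  moreover have "\<epsilon> x y + delta P le \<epsilon> y \<le> delta P le \<epsilon> x"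
    using cover by (rule delta_cover_le)
  moreover have "\<sigma> y \<le> \<sigma> x" "\<epsilon> x y = -1 \<longrightarrow> \<sigma> y < \<sigma> x"
    using \<sigma> cover unfolding partitions_iff_covers by blast+
  ultimately show "Phi P le \<epsilon> \<sigma> y \<le> Phi P le \<epsilon> \<sigma> x" "\<epsilon> x y = 1 \<Longrightarrow> Phi P le \<epsilon> \<sigma> y < Phi P le \<epsilon> \<sigma> x"
    using label_values[of x y] unfolding Phi_def by auto
qed

lemma mem_Phi_image_if_additive:
  assumes additive: "delta_additive \<epsilon>" and \<tau>: "\<tau> \<in> partitions P le (neg_lab \<epsilon>)"
  shows "\<tau> \<in> Phi P le \<epsilon> ` partitions P le \<epsilon>"
proof
  define \<sigma> where "\<sigma> x = (if x \<in> P then \<tau> x - delta P le \<epsilon> x else 0)" for x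
  show "\<tau> = Phi P le \<epsilon> \<sigma>"
    using \<tau> unfolding \<sigma>_def Phi_def partitions_def by auto
  show "\<sigma> \<in> partitions P le \<epsilon>"
    unfolding partitions_iff_covers
  proof (intro conjI allI impI)
    show "\<sigma> x = 0" if "x \<notin> P" for x
      using that unfolding \<sigma>_def by simp
    show "1 \<le> \<sigma> m" if "maximal_in P le m" for m
    proof -
      have "m \<in> P"
        using that unfolding maximal_in_def by blast
      with \<tau> show ?thesis
        using delta_maximal[OF that] unfolding partitions_def \<sigma>_def by auto
    qed
    fix x y
    assume cover: "covers P le x y"
    then have "x \<in> P" "y \<in> P"
      unfolding covers_def by blast+
    moreover have "delta P le \<epsilon> x = \<epsilon> x y + delta P le \<epsilon> y"
      using additive cover unfolding delta_additive_def by blast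
    moreover have "\<tau> y \<le> \<tau> x" "\<epsilon> x y = 1 \<longrightarrow> \<tau> y < \<tau> x"
      using \<tau> cover unfolding partitions_iff_covers neg_lab_eq_minus_one_iff by blast+
    ultimately show "\<sigma> y \<le> \<sigma> x" "\<epsilon> x y = -1 \<Longrightarrow> \<sigma> y < \<sigma> x"
      using label_values[of x y] unfolding \<sigma>_def by auto
  qed
qed

lemma additive_if_partitions_neg_subset_Phi_image:
  assumes surj: "partitions P le (neg_lab \<epsilon>) \<subseteq> Phi P le \<epsilon> ` partitions P le \<epsilon>"
  shows "delta_additive \<epsilon>"
  unfolding delta_additive_def
proof (intro allI impI)
  fix x y
  assume cover: "covers P le x y"
  then have "x \<in> P" "y \<in> P"
    unfolding covers_def by blast+
  obtain \<tau> where \<tau>: "\<tau> \<in> partitions P le (neg_lab \<epsilon>)"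
    and tight: "\<tau> x = \<tau> y + (if neg_lab \<epsilon> x y = -1 then 1 else 0)"
    using cover by (rule exists_partition_tight_at_cover)
  with surj obtain \<sigma> where \<sigma>: "\<sigma> \<in> partitions P le \<epsilon>" and "\<tau> = Phi P le \<epsilon> \<sigma>"
    by blast
  with \<open>x \<in> P\<close> \<open>y \<in> P\<close> have "\<tau> x - \<tau> y = \<sigma> x - \<sigma> y + delta P le \<epsilon> x - delta P le \<epsilon> y"
    unfolding Phi_def by simp
  moreover have "\<sigma> y \<le> \<sigma> x" "\<epsilon> x y = -1 \<longrightarrow> \<sigma> y < \<sigma> x"
    using \<sigma> cover unfolding partitions_iff_covers by blast+
  moreover have "\<epsilon> x y + delta P le \<epsilon> y \<le> delta P le \<epsilon> x"
    using cover by (rule delta_cover_le)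
  ultimately show "delta P le \<epsilon> x = \<epsilon> x y + delta P le \<epsilon> y"
    using tight label_values[of x y] unfolding neg_lab_eq_minus_one_iff by auto
qed

theorem bij_betw_Phi_iff_dual_consistent:
  "bij_betw (Phi P le \<epsilon>) (partitions P le \<epsilon>) (partitions P le (neg_lab \<epsilon>)) \<longleftrightarrow>
     dual_consistent P le \<epsilon>"
proof -
  have "Phi P le \<epsilon> ` partitions P le \<epsilon> \<subseteq> partitions P le (neg_lab \<epsilon>)"
    using Phi_mem_partitions_neg by blast
  then have "bij_betw (Phi P le \<epsilon>) (partitions P le \<epsilon>) (partitions P le (neg_lab \<epsilon>)) \<longleftrightarrow>
      partitions P le (neg_lab \<epsilon>) \<subseteq> Phi P le \<epsilon> ` partitions P le \<epsilon>"
    using inj_on_Phi unfolding bij_betw_def by blast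
  also have "\<dots> \<longleftrightarrow> delta_additive \<epsilon>"
    using mem_Phi_image_if_additive additive_if_partitions_neg_subset_Phi_image
    by blast
  finally show ?thesis
    unfolding dual_consistent_iff_delta_additive .
qed

end

theorem proposition7p1:
  fixes P :: "'a set" and le :: "'a \<Rightarrow> 'a \<Rightarrow> bool" and \<omega> :: "'a \<Rightarrow> nat"
  assumes "finite P"
    and "poset_on P le"
    and "bij_betw \<omega> P {1..card P}"
  shows "bij_betw (Phi P le (eps_of \<omega>)) (partitions P le (eps_of \<omega>))
            (partitions P le (neg_lab (eps_of \<omega>)))
         \<longleftrightarrow> dual_consistent P le (eps_of \<omega>)"
proof -
  (* Only the fact that eps_of takes the values 1 and -1 is needed; \<omega> need not be bijective. *)
  interpret labeled_poset P le "eps_of \<omega>"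
    using assms(1,2) by unfold_locales (auto simp: eps_of_def)
  show ?thesis
    by (rule bij_betw_Phi_iff_dual_consistent)
qed

end
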